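(* Let $d\ge 2$, $\omega=e^{2\pi i/d}$, $Z=\sum_{k=0}^{d-1}\omega^k|k\rangle\langle k|$, and for $r\in[0,1]$ let $\mathcal{G}_r(\rho)=r\rho+(1-r)Z\rho Z^\dagger$ be the dephasing channel on $\mathbb{C}^d$. For any $r_1,r_2\in[0,1]$, a single-system probe is sufficient for optimally distinguishing $\mathcal{G}_{r_1}$ and $\mathcal{G}_{r_2}$: the maximum of the success probability over single-system probes equals its maximum over all probes, including entangled probes with an arbitrary ancilla.
   Context: Two channels $\mathcal{N}_1,\mathcal{N}_2$ on $\mathbb{C}^d$, chosen with equal priors $1/2$, are discriminated in a single shot. A single-system probe is a state $\rho$ on $\mathbb{C}^d$ with success probability $\frac12+\frac14\|\mathcal{N}_1(\rho)-\mathcal{N}_2(\rho)\|_1$; a general (possibly entangled) probe is a state $\rho_{AB}$ on $\mathbb{C}^d\otimes\mathbb{C}^{d'}$ (any finite $d'$) with the channel acting on $A$, with success probability $\frac12+\frac14\|(\mathcal{N}_1\otimes\mathrm{id})(\rho_{AB})-(\mathcal{N}_2\otimes\mathrm{id})(\rho_{AB})\|_1$; $\|\cdot\|_1$ is the trace norm. *)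

theory Defs
  imports Complex_Main "Jordan_Normal_Form.Matrix"
begin

definition mtrace :: "complex mat \<Rightarrow> complex" where
  "mtrace A = (\<Sum>i<dim_row A. A $$ (i,i))"

definition adj :: "complex mat \<Rightarrow> complex mat" where
  "adj A = mat (dim_col A) (dim_row A) (\<lambda>(i,j). cnj (A $$ (j,i)))"

definition psd :: "nat \<Rightarrow> complex mat \<Rightarrow> bool" where
  "psd n A \<longleftrightarrow> A \<in> carrier_mat n n \<and>
     (\<forall>v \<in> carrier_vec n. let q = (\<Sum>i<n. cnj (v $ i) * (A *\<^sub>v v) $ i)
                            in Im q = 0 \<and> Re q \<ge> 0)"

definition density :: "nat \<Rightarrow> complex mat \<Rightarrow> bool" where
  "density n \<rho> \<longleftrightarrow> psd n \<rho> \<and> mtrace \<rho> = 1"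

definition mat_sqrt :: "nat \<Rightarrow> complex mat \<Rightarrow> complex mat" where
  "mat_sqrt n P = (THE B. psd n B \<and> B * B = P)"

definition trace_norm :: "complex mat \<Rightarrow> real" where
  "trace_norm A = Re (mtrace (mat_sqrt (dim_col A) (adj A * A)))"

definition Zop :: "nat \<Rightarrow> complex mat" where
  "Zop d = mat d d (\<lambda>(i,j). if i = j then cis (2 * pi * real i / real d) else 0)"

definition dephasing :: "nat \<Rightarrow> real \<Rightarrow> complex mat \<Rightarrow> complex mat" where
  "dephasing d r \<rho> = complex_of_real r \<cdot>\<^sub>m \<rho> + complex_of_real (1 - r) \<cdot>\<^sub>m (Zop d * \<rho> * adj (Zop d))"

(* (N \<otimes> id)(rho) for rho on C^d \<otimes> C^d', basis index of |a>|k> is a*d' + k *)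
definition tensor_id :: "(complex mat \<Rightarrow> complex mat) \<Rightarrow> nat \<Rightarrow> nat \<Rightarrow> complex mat \<Rightarrow> complex mat" where
  "tensor_id N d d' \<rho> = mat (d * d') (d * d') (\<lambda>(i,j).
      N (mat d d (\<lambda>(a,b). \<rho> $$ (a * d' + i mod d', b * d' + j mod d'))) $$ (i div d', j div d'))"

definition succ_single :: "(complex mat \<Rightarrow> complex mat) \<Rightarrow> (complex mat \<Rightarrow> complex mat) \<Rightarrow> complex mat \<Rightarrow> real" where
  "succ_single N1 N2 \<rho> = 1/2 + 1/4 * trace_norm (N1 \<rho> - N2 \<rho>)"

definition succ_general :: "(complex mat \<Rightarrow> complex mat) \<Rightarrow> (complex mat \<Rightarrow> complex mat) \<Rightarrow> nat \<Rightarrow> nat \<Rightarrow> complex mat \<Rightarrow> real" where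
  "succ_general N1 N2 d d' \<rho> = 1/2 + 1/4 * trace_norm (tensor_id N1 d d' \<rho> - tensor_id N2 d d' \<rho>)"

end

theory Submission
  imports Defs "Jordan_Normal_Form.Schur_Decomposition"
begin

text \<open>
  For both kinds of probe the difference of the two output states is \<open>(r1 - r2) (\<rho> - U \<rho> U\<^sup>\<dagger>)\<close>
  with a diagonal unitary \<open>U\<close> (\<open>Z\<close>, resp. \<open>Z \<otimes> 1\<close>), and \<open>U \<rho> U\<^sup>\<dagger>\<close> is again a state.
  The trace norm of a difference of two states is at most 2: diagonalising \<open>\<rho> - \<sigma>\<close> in an orthonormal
  eigenbasis, each eigenvalue is a difference of two nonnegative diagonal entries of \<open>\<rho>\<close> and
  \<open>\<sigma>\<close>, whose sums are the traces. Hence no probe beats \<open>1/2 + \<bar>r1 - r2\<bar>/2\<close>, and the single-system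
  probe \<open>|e\<rangle>\<langle>e|\<close>, \<open>e\<close> the uniform superposition, attains it: \<open>Z e\<close> is orthogonal to \<open>e\<close> because
  the \<open>d\<close>-th roots of unity sum to zero, and \<open>|u\<rangle>\<langle>u| - |w\<rangle>\<langle>w|\<close> has trace norm 2 for
  orthonormal \<open>u, w\<close>.

  Since the trace norm is defined through the positive square root, computing it needs
  uniqueness of positive square roots, which rests on the spectral theorem for Hermitian matrices,
  obtained by greedily extending an orthonormal family of eigenvectors.
\<close>

section \<open>Adjoint, inner product and positive semidefiniteness\<close>

lemma dim_adj [simp]: "dim_row (adj A) = dim_col A" "dim_col (adj A) = dim_row A"
  by (auto simp: adj_def)

lemma adj_carrier_mat [simp]: "A \<in> carrier_mat n m \<Longrightarrow> adj A \<in> carrier_mat m n"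
  by (auto simp: adj_def)

lemma index_adj [simp]: "i < dim_col A \<Longrightarrow> j < dim_row A \<Longrightarrow> adj A $$ (i,j) = cnj (A $$ (j,i))"
  by (auto simp: adj_def)

lemma adj_adj [simp]: "adj (adj A) = A"
  by (rule eq_matI) auto

lemma adj_mult: "A \<in> carrier_mat n m \<Longrightarrow> B \<in> carrier_mat m k \<Longrightarrow> adj (A * B) = adj B * adj A"
  by (intro eq_matI) (auto simp: scalar_prod_def mult.commute)

lemma adj_minus: "A \<in> carrier_mat n m \<Longrightarrow> B \<in> carrier_mat n m \<Longrightarrow> adj (A - B) = adj A - adj B"
  by (intro eq_matI) auto

lemma adj_one [simp]: "adj (1\<^sub>m n) = 1\<^sub>m n"
  by (intro eq_matI) auto

lemma adj_smult: "adj (c \<cdot>\<^sub>m A) = cnj c \<cdot>\<^sub>m adj A"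
  by (intro eq_matI) auto

lemma mult_mat_vec_zero [simp]: "A \<in> carrier_mat n m \<Longrightarrow> A *\<^sub>v 0\<^sub>v m = 0\<^sub>v n"
  by (intro eq_vecI) (auto simp: scalar_prod_def)

lemma zero_mult_mat_vec [simp]: "v \<in> carrier_vec n \<Longrightarrow> 0\<^sub>m k n *\<^sub>v v = 0\<^sub>v k"
  by (intro eq_vecI) (auto simp: scalar_prod_def)

lemma smult_mat_mult_vec: "A \<in> carrier_mat n m \<Longrightarrow> v \<in> carrier_vec m \<Longrightarrow> (c \<cdot>\<^sub>m A) *\<^sub>v v = c \<cdot>\<^sub>v (A *\<^sub>v v)"
  by (intro eq_vecI) (auto simp: scalar_prod_def sum_distrib_left mult.assoc)

lemma index_mult_mat_vec_unit_vec:
  "(A :: complex mat) \<in> carrier_mat m n \<Longrightarrow> i < m \<Longrightarrow> j < n \<Longrightarrow> (A *\<^sub>v unit_vec n j) $ i = A $$ (i,j)"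
  by (simp add: scalar_prod_def unit_vec_def if_distrib[of "\<lambda>x. _ * x"] cong: if_cong)

text \<open>In the library's carrier and associativity rules the inner dimension occurs only in the
  premises, so the simplifier cannot use them; their square instances
  \<open>square_mat_simps[where n = n]\<close> can.\<close>
lemmas square_mat_simps =
  mult_carrier_mat[of _ n n _ n] assoc_mult_mat[of _ n n _ n _ n] left_mult_one_mat[of _ n n]
  right_mult_one_mat[of _ n n] mult_mat_vec_carrier[of _ n n] assoc_mult_mat_vec[of _ n n _ n]
  for n :: nat

definition cinner :: "complex vec \<Rightarrow> complex vec \<Rightarrow> complex" where
  "cinner x y = (\<Sum>i<dim_vec x. cnj (x $ i) * y $ i)"

lemma cnj_mult_self: "cnj z * z = complex_of_real ((cmod z)\<^sup>2)"
  by (metis complex_norm_square mult.commute)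

lemma cinner_self: "cinner x x = complex_of_real (\<Sum>i<dim_vec x. (cmod (x $ i))\<^sup>2)"
  unfolding cinner_def cnj_mult_self of_real_sum ..

lemma cinner_self_eq_0_iff:
  assumes "x \<in> carrier_vec n" shows "cinner x x = 0 \<longleftrightarrow> x = 0\<^sub>v n"
proof -
  have "cinner x x = 0 \<longleftrightarrow> (\<forall>i<n. (cmod (x $ i))\<^sup>2 = 0)"
    using assms unfolding cinner_self of_real_eq_0_iff by (subst sum_nonneg_eq_0_iff) auto
  also have "\<dots> \<longleftrightarrow> x = 0\<^sub>v n"
    using assms by (auto simp: vec_eq_iff)
  finally show ?thesis .
qed

lemma cinner_commute: "dim_vec y = dim_vec x \<Longrightarrow> cinner y x = cnj (cinner x y)"
  by (simp add: cinner_def mult.commute)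

lemma cinner_adj:
  assumes A: "A \<in> carrier_mat n m" and x: "x \<in> carrier_vec m" and y: "y \<in> carrier_vec n"
  shows "cinner y (A *\<^sub>v x) = cinner (adj A *\<^sub>v y) x"
proof -
  have "cinner y (A *\<^sub>v x) = (\<Sum>i<n. \<Sum>j<m. cnj (y $ i) * A $$ (i,j) * x $ j)"
    using A x y by (simp add: cinner_def scalar_prod_def lessThan_atLeast0 sum_distrib_left mult.assoc)
  also have "\<dots> = (\<Sum>j<m. (\<Sum>i<n. cnj (y $ i) * A $$ (i,j)) * x $ j)"
    by (subst sum.swap) (simp add: sum_distrib_right)
  also have "\<dots> = cinner (adj A *\<^sub>v y) x"
    using A x y by (simp add: cinner_def scalar_prod_def lessThan_atLeast0 mult.commute)
  finally show ?thesis .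
qed

lemma cinner_smult_right: "dim_vec y = dim_vec x \<Longrightarrow> cinner x (c \<cdot>\<^sub>v y) = c * cinner x y"
  by (simp add: cinner_def sum_distrib_left mult.commute mult.left_commute)

lemma cinner_smult_left: "cinner (c \<cdot>\<^sub>v x) y = cnj c * cinner x y"
  by (simp add: cinner_def sum_distrib_left mult.commute mult.left_commute)

lemma cinner_add_right:
  "dim_vec y = dim_vec x \<Longrightarrow> dim_vec z = dim_vec x \<Longrightarrow> cinner x (y + z) = cinner x y + cinner x z"
  by (simp add: cinner_def sum.distrib algebra_simps)

lemma cinner_diff_right:
  "dim_vec y = dim_vec x \<Longrightarrow> dim_vec z = dim_vec x \<Longrightarrow> cinner x (y - z) = cinner x y - cinner x z"
  by (simp add: cinner_def sum_subtractf algebra_simps)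

lemma cinner_zero_right [simp]: "cinner x (0\<^sub>v (dim_vec x)) = 0"
  by (auto simp: cinner_def intro!: sum.neutral)

lemma cinner_unit_vec: "j < n \<Longrightarrow> cinner (unit_vec n j) x = x $ j"
proof -
  assume j: "j < n"
  have "cinner (unit_vec n j) x = (\<Sum>i<n. if j = i then x $ i else 0)"
    unfolding cinner_def by (rule sum.cong) (auto simp: unit_vec_def)
  then show ?thesis using j by simp
qed

lemma cinner_mult_vec_double_sum:
  "A \<in> carrier_mat n n \<Longrightarrow> v \<in> carrier_vec n \<Longrightarrow>
    cinner v (A *\<^sub>v v) = (\<Sum>i<n. \<Sum>j<n. cnj (v $ i) * A $$ (i,j) * v $ j)"
  by (simp add: cinner_def scalar_prod_def lessThan_atLeast0 sum_distrib_left mult.assoc)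

lemma index_adj_mult:
  "X \<in> carrier_mat n m \<Longrightarrow> Y \<in> carrier_mat n p \<Longrightarrow> i < m \<Longrightarrow> j < p \<Longrightarrow>
    (adj X * Y) $$ (i,j) = cinner (col X i) (col Y j)"
  by (simp add: cinner_def scalar_prod_def lessThan_atLeast0)

lemma index_adj_mult_vec:
  "X \<in> carrier_mat n m \<Longrightarrow> v \<in> carrier_vec n \<Longrightarrow> i < m \<Longrightarrow> (adj X *\<^sub>v v) $ i = cinner (col X i) v"
  by (simp add: cinner_def scalar_prod_def lessThan_atLeast0)

lemma mtrace_mult_comm:
  assumes A: "A \<in> carrier_mat n k" and B: "B \<in> carrier_mat k n"
  shows "mtrace (A * B) = mtrace (B * A)"
proof -
  have "mtrace (A * B) = (\<Sum>i<n. \<Sum>l<k. A $$ (i,l) * B $$ (l,i))"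
    using A B by (simp add: mtrace_def scalar_prod_def lessThan_atLeast0)
  also have "\<dots> = (\<Sum>l<k. \<Sum>i<n. B $$ (l,i) * A $$ (i,l))"
    by (subst sum.swap) (simp add: mult.commute)
  also have "\<dots> = mtrace (B * A)"
    using A B by (simp add: mtrace_def scalar_prod_def lessThan_atLeast0)
  finally show ?thesis .
qed

lemma mtrace_one [simp]: "mtrace (1\<^sub>m n) = of_nat n"
  by (simp add: mtrace_def)

lemma mtrace_add: "A \<in> carrier_mat n n \<Longrightarrow> B \<in> carrier_mat n n \<Longrightarrow> mtrace (A + B) = mtrace A + mtrace B"
  by (simp add: mtrace_def sum.distrib)

lemma mtrace_minus: "A \<in> carrier_mat n n \<Longrightarrow> B \<in> carrier_mat n n \<Longrightarrow> mtrace (A - B) = mtrace A - mtrace B"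
  by (simp add: mtrace_def sum_subtractf)

lemma mtrace_smult: "A \<in> carrier_mat n n \<Longrightarrow> mtrace (c \<cdot>\<^sub>m A) = c * mtrace A"
  by (auto simp: mtrace_def sum_distrib_left intro!: sum.cong)

lemma mtrace_similar:
  assumes W: "W \<in> carrier_mat n n" and V: "V \<in> carrier_mat n n" and VW: "V * W = 1\<^sub>m n"
    and A: "A \<in> carrier_mat n n"
  shows "mtrace (W * A * V) = mtrace A"
proof -
  have "mtrace (W * A * V) = mtrace (V * (W * A))"
    by (rule mtrace_mult_comm[OF mult_carrier_mat[OF W A] V])
  also have "V * (W * A) = A" using VW A by (simp add: assoc_mult_mat[OF V W A, symmetric])
  finally show ?thesis .
qed

lemma psd_iff_cinner:
  "psd n A \<longleftrightarrow> A \<in> carrier_mat n n \<and>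
     (\<forall>v \<in> carrier_vec n. Im (cinner v (A *\<^sub>v v)) = 0 \<and> Re (cinner v (A *\<^sub>v v)) \<ge> 0)"
  unfolding psd_def cinner_def Let_def by auto

lemma psd_add: assumes A: "psd n A" and B: "psd n B" shows "psd n (A + B)"
proof -
  have C: "A \<in> carrier_mat n n" "B \<in> carrier_mat n n" using A B by (simp_all add: psd_def)
  have "cinner v ((A + B) *\<^sub>v v) = cinner v (A *\<^sub>v v) + cinner v (B *\<^sub>v v)" if "v \<in> carrier_vec n" for v
    using C that by (simp add: add_mult_distrib_mat_vec[of _ n n] cinner_add_right)
  then show ?thesis using A B by (auto simp: psd_iff_cinner)
qed

lemma psd_smult_real: assumes c: "c \<ge> 0" and A: "psd n A" shows "psd n (complex_of_real c \<cdot>\<^sub>m A)"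
proof -
  have C: "A \<in> carrier_mat n n" using A by (simp add: psd_def)
  have "cinner v ((complex_of_real c \<cdot>\<^sub>m A) *\<^sub>v v) = complex_of_real c * cinner v (A *\<^sub>v v)"
    if "v \<in> carrier_vec n" for v
    using C that by (simp add: smult_mat_mult_vec[OF C that] cinner_smult_right carrier_vecD carrier_matD)
  then show ?thesis using A c by (auto simp: psd_iff_cinner)
qed

definition hermitian :: "nat \<Rightarrow> complex mat \<Rightarrow> bool" where
  "hermitian n A \<longleftrightarrow> A \<in> carrier_mat n n \<and> adj A = A"

lemma hermitian_cinner_real:
  assumes "hermitian n A" and x: "x \<in> carrier_vec n"
  shows "cnj (cinner x (A *\<^sub>v x)) = cinner x (A *\<^sub>v x)"
proof -
  have A: "A \<in> carrier_mat n n" "adj A = A" using assms by (auto simp: hermitian_def)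
  have "cinner x (A *\<^sub>v x) = cinner (A *\<^sub>v x) x" using cinner_adj[OF A(1) x x] A(2) by simp
  also have "\<dots> = cnj (cinner x (A *\<^sub>v x))" using A(1) x by (intro cinner_commute) simp
  finally show ?thesis by simp
qed

lemma hermitian_eigenvalue_real:
  assumes H: "hermitian n A" and ev: "eigenvector A x \<mu>"
  shows "\<mu> = complex_of_real (Re \<mu>)"
proof -
  have A: "A \<in> carrier_mat n n" using H by (simp add: hermitian_def)
  have x: "x \<in> carrier_vec n" "x \<noteq> 0\<^sub>v n" and Ax: "A *\<^sub>v x = \<mu> \<cdot>\<^sub>v x"
    using ev A by (auto simp: eigenvector_def)
  have xx: "cinner x x \<noteq> 0" "cnj (cinner x x) = cinner x x"
    using x cinner_self_eq_0_iff[OF x(1)] by (auto simp: cinner_self)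
  have "cinner x (A *\<^sub>v x) = \<mu> * cinner x x" using x by (simp add: Ax cinner_smult_right)
  with hermitian_cinner_real[OF H x(1)] xx have "cnj \<mu> = \<mu>" by simp
  then have "Im (cnj \<mu>) = Im \<mu>" by simp
  then have "Im \<mu> = 0" by simp
  then show ?thesis by (simp add: complex_eq_iff)
qed

lemma cinner_two_point:
  fixes c :: complex
  assumes B: "B \<in> carrier_mat n n" and a: "a < n" and b: "b < n" and ab: "a \<noteq> b"
  defines "v \<equiv> vec n (\<lambda>i. if i = a then 1 else if i = b then c else 0)"
  shows "cinner v (B *\<^sub>v v) = B $$ (a,a) + c * B $$ (a,b) + cnj c * B $$ (b,a) + cnj c * c * B $$ (b,b)"
proof -
  have sub: "{a,b} \<subseteq> {..<n}" using a b by auto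
  have v0: "\<And>i. i < n \<Longrightarrow> i \<notin> {a,b} \<Longrightarrow> v $ i = 0" by (auto simp: v_def)
  have va: "v $ a = 1" "v $ b = c" using a b ab by (auto simp: v_def)
  have "cinner v (B *\<^sub>v v) = (\<Sum>i<n. \<Sum>j<n. cnj (v $ i) * B $$ (i,j) * v $ j)"
    using B by (intro cinner_mult_vec_double_sum) (auto simp: v_def)
  also have "\<dots> = (\<Sum>i<n. \<Sum>j\<in>{a,b}. cnj (v $ i) * B $$ (i,j) * v $ j)"
    by (intro sum.cong refl sum.mono_neutral_right[OF _ sub]) (use v0 in auto)
  also have "\<dots> = (\<Sum>i\<in>{a,b}. \<Sum>j\<in>{a,b}. cnj (v $ i) * B $$ (i,j) * v $ j)"
    by (rule sum.mono_neutral_right[OF _ sub]) (use v0 in auto)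
  also have "\<dots> = B $$ (a,a) + c * B $$ (a,b) + cnj c * B $$ (b,a) + cnj c * c * B $$ (b,b)"
    using ab va by (simp add: algebra_simps)
  finally show ?thesis .
qed

lemma psd_hermitian:
  assumes P: "psd n B" shows "hermitian n B"
proof -
  have B: "B \<in> carrier_mat n n" using P by (simp add: psd_def)
  have real: "Im (cinner v (B *\<^sub>v v)) = 0" if "v \<in> carrier_vec n" for v
    using P that by (simp add: psd_iff_cinner)
  have diag: "Im (B $$ (a,a)) = 0" if a: "a < n" for a
    using real[of "unit_vec n a"] cinner_unit_vec[of a n "B *\<^sub>v unit_vec n a"] a B by simp
  have off: "B $$ (b,a) = cnj (B $$ (a,b))" if a: "a < n" and b: "b < n" and ab: "a \<noteq> b" for a b
  proof -
    have "Im (B $$ (a,b)) + Im (B $$ (b,a)) = 0"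
      using real[of "vec n (\<lambda>i. if i = a then 1 else if i = b then 1 else 0)"]
        cinner_two_point[OF B a b ab, of 1] diag[OF a] diag[OF b] by simp
    moreover have "Re (B $$ (a,b)) - Re (B $$ (b,a)) = 0"
      using real[of "vec n (\<lambda>i. if i = a then 1 else if i = b then \<i> else 0)"]
        cinner_two_point[OF B a b ab, of \<i>] diag[OF a] diag[OF b] by simp
    ultimately show ?thesis by (intro complex_eqI) auto
  qed
  have "adj B = B"
  proof (rule eq_matI)
    fix i j assume ij: "i < dim_row B" "j < dim_col B"
    show "adj B $$ (i,j) = B $$ (i,j)"
      using ij B diag[of i] off[of j i] by (cases "i = j") (auto simp: complex_eq_iff)
  qed (use B in auto)
  then show ?thesis using B by (simp add: hermitian_def)
qed

section \<open>Spectral theorem for Hermitian matrices\<close>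

lemma adj_mult_self_eq_0_if_mtrace_0:
  assumes X: "X \<in> carrier_mat n m" and tr: "mtrace (adj X * X) = 0"
  shows "X = 0\<^sub>m n m"
proof -
  have "mtrace (adj X * X) = (\<Sum>j<m. cinner (col X j) (col X j))"
    using X by (auto simp: mtrace_def cinner_def scalar_prod_def lessThan_atLeast0 intro!: sum.cong)
  also have "\<dots> = complex_of_real (\<Sum>j<m. \<Sum>i<n. (cmod (X $$ (i,j)))\<^sup>2)"
    using X unfolding of_real_sum by (intro sum.cong refl) (simp add: cinner_self)
  finally have "mtrace (adj X * X) = complex_of_real (\<Sum>j<m. \<Sum>i<n. (cmod (X $$ (i,j)))\<^sup>2)" .
  with tr have "(\<Sum>j<m. \<Sum>i<n. (cmod (X $$ (i,j)))\<^sup>2) = 0" by (metis of_real_eq_0_iff)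
  then have "\<forall>j<m. \<forall>i<n. (cmod (X $$ (i,j)))\<^sup>2 = 0"
    by (simp add: sum_nonneg sum_nonneg_eq_0_iff)
  then show ?thesis using X by (intro eq_matI) auto
qed

lemma mtrace_square_strictly_upper_triangular_eq_0:
  assumes B: "B \<in> carrier_mat n n" and ut: "upper_triangular B" and d: "\<And>i. i < n \<Longrightarrow> B $$ (i,i) = 0"
  shows "mtrace (B * B) = 0"
proof -
  have zero: "B $$ (i,k) * B $$ (k,i) = 0" if "i < n" "k < n" for i k
    using that ut B d[of i] by (cases k i rule: linorder_cases) (auto simp: upper_triangular_def)
  have "mtrace (B * B) = (\<Sum>i<n. \<Sum>k<n. B $$ (i,k) * B $$ (k,i))"
    using B by (simp add: mtrace_def scalar_prod_def lessThan_atLeast0)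
  also have "\<dots> = 0" by (auto intro!: sum.neutral simp: zero)
  finally show ?thesis .
qed

text \<open>Via a Schur triangularisation \<open>H = P B Q\<close>, the trace of \<open>adj H * H = H * H\<close> is that of
  \<open>B * B\<close>, which vanishes when all eigenvalues, i.e. all diagonal entries of \<open>B\<close>, are zero.\<close>

lemma hermitian_eq_0_if_eigenvalues_0:
  assumes H: "hermitian n H" and E: "\<And>\<mu>. eigenvalue H \<mu> \<Longrightarrow> \<mu> = 0"
  shows "H = 0\<^sub>m n n"
proof -
  have C: "H \<in> carrier_mat n n" and adjH: "adj H = H" using H by (auto simp: hermitian_def)
  obtain es where es: "char_poly H = (\<Prod>a\<leftarrow>es. [:- a, 1:])" "length es = n"
    using char_poly_factorized[OF C] by blast
  have es0: "e = 0" if "e \<in> set es" for e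
  proof -
    have "poly (char_poly H) e = 0" unfolding es(1) poly_prod_list
      using that by (induction es) auto
    then show ?thesis using E eigenvalue_root_char_poly[OF C] by blast
  qed
  obtain B P Q where S: "schur_decomposition H es = (B,P,Q)" by (cases "schur_decomposition H es") auto
  from schur_decomposition[OF C es(1) S] have
    sim: "similar_mat_wit H B P Q" and ut: "upper_triangular B" and diag: "diag_mat B = es" by auto
  from sim C have BPQ: "B \<in> carrier_mat n n" "P \<in> carrier_mat n n" "Q \<in> carrier_mat n n" "Q * P = 1\<^sub>m n"
    unfolding similar_mat_wit_def Let_def by auto
  have "B $$ (i,i) = 0" if "i < n" for i
  proof -
    have "es ! i = B $$ (i,i)" unfolding diag[symmetric] diag_mat_def using that BPQ by simp
    then show ?thesis using es0 nth_mem that es(2) by metis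
  qed
  then have trB: "mtrace (B * B) = 0" by (rule mtrace_square_strictly_upper_triangular_eq_0[OF BPQ(1) ut])
  have "H * H = P * (B * B) * Q"
    using similar_mat_wit_pow_id[OF sim, of 2] C BPQ by (simp add: numeral_2_eq_2)
  then have "mtrace (adj H * H) = mtrace (Q * (P * (B * B)))"
    using BPQ adjH mtrace_mult_comm[of "P * (B * B)" n n Q] by simp
  also have "\<dots> = mtrace (B * B)"
    using BPQ by (simp add: assoc_mult_mat[of Q n n P n "B * B" n, symmetric])
  finally have "mtrace (adj H * H) = 0" using trB by simp
  then show ?thesis using adj_mult_self_eq_0_if_mtrace_0[OF C] by simp
qed

definition real_diag :: "nat \<Rightarrow> (nat \<Rightarrow> real) \<Rightarrow> complex mat" where
  "real_diag n l = mat n n (\<lambda>(i,j). if i = j then complex_of_real (l i) else 0)"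

lemma real_diag_carrier [simp]: "real_diag n l \<in> carrier_mat n n"
  by (simp add: real_diag_def)

lemma dim_real_diag [simp]: "dim_row (real_diag n l) = n" "dim_col (real_diag n l) = n"
  by (auto simp: real_diag_def)

lemma adj_real_diag [simp]: "adj (real_diag n l) = real_diag n l"
  by (rule eq_matI) (auto simp: real_diag_def)

lemma col_mult_real_diag:
  assumes "U \<in> carrier_mat m k" "j < k"
  shows "col (U * real_diag k l) j = complex_of_real (l j) \<cdot>\<^sub>v col U j"
  using assms by (intro eq_vecI)
    (auto simp: scalar_prod_def real_diag_def if_distrib[of "\<lambda>x. _ * x"] mult.commute cong: if_cong)

lemma isometry_complement_projector:
  assumes U: "U \<in> carrier_mat n k" and UU: "adj U * U = 1\<^sub>m k"
  defines "P \<equiv> 1\<^sub>m n - U * adj U"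
  shows "P \<in> carrier_mat n n" "adj P = P" "adj U * P = 0\<^sub>m k n" "P * P = P"
    and "mtrace P = of_nat n - of_nat k"
proof -
  have aU: "adj U \<in> carrier_mat k n" using U by simp
  show PC: "P \<in> carrier_mat n n" unfolding P_def using U aU by (intro minus_carrier_mat) auto
  show adjP: "adj P = P" using U aU by (simp add: P_def adj_minus[of _ n n] adj_mult[of _ n k _ n])
  have UaU: "U * adj U \<in> carrier_mat n n" using U aU by simp
  have "adj U * P = adj U - (adj U * U) * adj U"
    unfolding P_def mult_minus_distrib_mat[OF aU one_carrier_mat UaU]
    using U aU by (simp add: assoc_mult_mat[OF aU U aU])
  then show UP: "adj U * P = 0\<^sub>m k n" using UU aU by (simp add: left_mult_one_mat)
  have "P * U = adj (adj U * P)" using adj_mult[OF aU PC] adjP by simp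
  then have PU: "P * U = 0\<^sub>m n k" unfolding UP by (intro eq_matI) auto
  have "P * P = P * 1\<^sub>m n - P * (U * adj U)"
    using mult_minus_distrib_mat[OF PC one_carrier_mat UaU] by (simp only: P_def)
  also have "P * (U * adj U) = 0\<^sub>m n n"
    using PU aU by (simp add: assoc_mult_mat[OF PC U aU, symmetric] left_mult_zero_mat)
  finally show "P * P = P" using PC by (intro eq_matI) auto
  have "mtrace (U * adj U) = of_nat k" using mtrace_mult_comm[OF U aU] UU by simp
  then show "mtrace P = of_nat n - of_nat k" using U by (simp add: P_def mtrace_minus[of _ n])
qed

lemma hermitian_commute_complement_projector:
  assumes H: "hermitian n A" and U: "U \<in> carrier_mat n k" and AU: "A * U = U * real_diag k l"
  shows "A * (1\<^sub>m n - U * adj U) = (1\<^sub>m n - U * adj U) * A"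
proof -
  have A: "A \<in> carrier_mat n n" "adj A = A" using H by (auto simp: hermitian_def)
  have aU: "adj U \<in> carrier_mat k n" and UaU: "U * adj U \<in> carrier_mat n n" using U by auto
  have UA: "adj U * A = real_diag k l * adj U"
    using adj_mult[OF A(1) U] adj_mult[OF U real_diag_carrier] AU A(2) by simp
  have "A * (1\<^sub>m n - U * adj U) = A - U * real_diag k l * adj U"
    using mult_minus_distrib_mat[OF A(1) one_carrier_mat UaU] A(1) U aU AU
    by (simp add: assoc_mult_mat[OF A(1) U aU, symmetric])
  moreover have "(1\<^sub>m n - U * adj U) * A = A - U * real_diag k l * adj U"
    using minus_mult_distrib_mat[OF one_carrier_mat UaU A(1)] A(1) U aU UA
    by (simp add: assoc_mult_mat[OF U aU A(1)] assoc_mult_mat[OF U real_diag_carrier aU])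
  ultimately show ?thesis by simp
qed

text \<open>The orthogonal complement of the span of \<open>A\<close>-eigenvectors is \<open>A\<close>-invariant. Either the
  compression \<open>A * P\<close> to that complement has a nonzero eigenvalue, whose eigenvectors lie in the
  complement, or it vanishes, and then every nonzero vector of the complement is in the kernel of \<open>A\<close>.\<close>

lemma hermitian_eigenvector_orthogonal_to_isometry:
  assumes H: "hermitian n A" and U: "U \<in> carrier_mat n k" and UU: "adj U * U = 1\<^sub>m k"
    and k: "k < n" and AU: "A * U = U * real_diag k l"
  shows "\<exists>x \<mu>. x \<in> carrier_vec n \<and> x \<noteq> 0\<^sub>v n \<and> adj U *\<^sub>v x = 0\<^sub>v k \<and> A *\<^sub>v x = complex_of_real \<mu> \<cdot>\<^sub>v x"
proof -
  have A: "A \<in> carrier_mat n n" "adj A = A" using H by (auto simp: hermitian_def)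
  have aU: "adj U \<in> carrier_mat k n" using U by simp
  define P where "P = 1\<^sub>m n - U * adj U"
  note P = isometry_complement_projector[OF U UU, folded P_def]
  have AP: "A * P = P * A" unfolding P_def by (rule hermitian_commute_complement_projector[OF H U AU])
  have AP_herm: "hermitian n (A * P)"
    using adj_mult[OF A(1) P(1)] A P(1,2) AP by (simp add: hermitian_def)
  show ?thesis
  proof (cases "\<exists>\<mu>. eigenvalue (A * P) \<mu> \<and> \<mu> \<noteq> 0")
    case True
    then obtain \<mu> x where \<mu>: "\<mu> \<noteq> 0" and ev: "eigenvector (A * P) x \<mu>"
      unfolding eigenvalue_def by blast
    then have x: "x \<in> carrier_vec n" "x \<noteq> 0\<^sub>v n" and APx: "(A * P) *\<^sub>v x = \<mu> \<cdot>\<^sub>v x"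
      using A(1) by (auto simp: eigenvector_def)
    have "P * (A * P) = A * (P * P)"
      using assoc_mult_mat[OF P(1) A(1) P(1)] assoc_mult_mat[OF A(1) P(1) P(1)] AP by simp
    then have PAP: "P * (A * P) = A * P" using P(4) by simp
    have "\<mu> \<cdot>\<^sub>v (P *\<^sub>v x) = P *\<^sub>v ((A * P) *\<^sub>v x)"
      using APx P(1) x by (simp add: mult_mat_vec)
    also have "\<dots> = (P * (A * P)) *\<^sub>v x"
      by (rule assoc_mult_mat_vec[symmetric]) (use A(1) P(1) x in auto)
    finally have "\<mu> \<cdot>\<^sub>v (P *\<^sub>v x) = \<mu> \<cdot>\<^sub>v x" using PAP APx by simp
    then have Px: "P *\<^sub>v x = x"
      using \<mu> by (auto simp: vec_eq_iff)
    have "adj U *\<^sub>v x = (adj U * P) *\<^sub>v x" using Px aU P(1) x by simp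
    then have "adj U *\<^sub>v x = 0\<^sub>v k" using P(3) x by simp
    moreover have Ax: "A *\<^sub>v x = \<mu> \<cdot>\<^sub>v x" using APx Px A(1) P(1) x by simp
    moreover have "\<mu> = complex_of_real (Re \<mu>)"
      using hermitian_eigenvalue_real[OF H] x Ax A(1) by (simp add: eigenvector_def)
    ultimately show ?thesis using x by metis
  next
    case False
    then have AP0: "A * P = 0\<^sub>m n n" using hermitian_eq_0_if_eigenvalues_0[OF AP_herm] by blast
    have "P \<noteq> 0\<^sub>m n n" using P(5) k by (auto simp: mtrace_def)
    then obtain i j where ij: "i < n" "j < n" "P $$ (i,j) \<noteq> 0"
      using P(1) by (metis carrier_matD eq_matI index_zero_mat(1,2,3))
    define x where "x = col P j"
    have x: "x \<in> carrier_vec n" "x \<noteq> 0\<^sub>v n"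
      using ij P(1) by (auto simp: x_def vec_eq_iff)
    have "adj U *\<^sub>v x = 0\<^sub>v k" using P(3) aU P(1) ij by (simp add: x_def flip: col_mult2)
    moreover have "A *\<^sub>v x = 0\<^sub>v n" using AP0 A(1) P(1) ij by (simp add: x_def flip: col_mult2)
    then have "A *\<^sub>v x = complex_of_real 0 \<cdot>\<^sub>v x" using x(1) by (auto intro!: eq_vecI)
    ultimately show ?thesis using x by blast
  qed
qed

definition append_col :: "complex mat \<Rightarrow> complex vec \<Rightarrow> complex mat" where
  "append_col U w = mat (dim_row U) (Suc (dim_col U)) (\<lambda>(i,j). if j < dim_col U then U $$ (i,j) else w $ i)"

lemma append_col_carrier: "U \<in> carrier_mat n k \<Longrightarrow> append_col U w \<in> carrier_mat n (Suc k)"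
  by (simp add: append_col_def)

lemma col_append_col:
  "U \<in> carrier_mat n k \<Longrightarrow> w \<in> carrier_vec n \<Longrightarrow> j < Suc k \<Longrightarrow>
    col (append_col U w) j = (if j < k then col U j else w)"
  by (auto simp: append_col_def)

lemma isometry_append_col:
  assumes U: "U \<in> carrier_mat n k" and UU: "adj U * U = 1\<^sub>m k"
    and w: "w \<in> carrier_vec n" "cinner w w = 1" "adj U *\<^sub>v w = 0\<^sub>v k"
  shows "adj (append_col U w) * append_col U w = 1\<^sub>m (Suc k)"
proof (rule eq_matI)
  note V = append_col_carrier[OF U, of w]
  note colV = col_append_col[OF U w(1)]
  have Uw: "cinner (col U i) w = 0" if "i < k" for i
    using index_adj_mult_vec[OF U w(1) that] w(3) that by simp
  fix i j assume "i < dim_row (1\<^sub>m (Suc k))" "j < dim_col (1\<^sub>m (Suc k))"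
  then have ij: "i < Suc k" "j < Suc k" by auto
  have UU': "cinner (col U i) (col U j) = 1\<^sub>m k $$ (i,j)" if "i < k" "j < k"
    using index_adj_mult[OF U U that] UU by simp
  show "(adj (append_col U w) * append_col U w) $$ (i,j) = 1\<^sub>m (Suc k) $$ (i,j)"
    using index_adj_mult[OF V V ij] colV[OF ij(1)] colV[OF ij(2)] ij UU' Uw
      cinner_commute[of w "col U i" for i] U w(1,2)
    by (cases "i < k"; cases "j < k") (auto simp: less_Suc_eq)
qed (use U in \<open>simp_all add: append_col_def\<close>)

lemma mult_append_col_real_diag:
  assumes A: "A \<in> carrier_mat n n" and U: "U \<in> carrier_mat n k" and AU: "A * U = U * real_diag k l"
    and w: "w \<in> carrier_vec n" and Aw: "A *\<^sub>v w = complex_of_real \<mu> \<cdot>\<^sub>v w"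
  shows "A * append_col U w = append_col U w * real_diag (Suc k) (l(k := \<mu>))"
proof (rule mat_col_eqI)
  note V = append_col_carrier[OF U, of w]
  fix j assume "j < dim_col (append_col U w * real_diag (Suc k) (l(k := \<mu>)))"
  then have j: "j < Suc k" by simp
  have "A *\<^sub>v col U j = complex_of_real (l j) \<cdot>\<^sub>v col U j" if "j < k"
    using col_mult2[OF A U that] AU col_mult_real_diag[OF U that] by simp
  then show "col (A * append_col U w) j = col (append_col U w * real_diag (Suc k) (l(k := \<mu>))) j"
    using col_mult2[OF A V j] col_mult_real_diag[OF V j] col_append_col[OF U w j] Aw j by auto
qed (use A U in \<open>simp_all add: append_col_def\<close>)

lemma unit_multipleE:
  assumes x: "x \<in> carrier_vec n" "x \<noteq> 0\<^sub>v n"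
  obtains c :: complex where "cinner (c \<cdot>\<^sub>v x) (c \<cdot>\<^sub>v x) = 1"
proof -
  define s where "s = (\<Sum>i<n. (cmod (x $ i))\<^sup>2)"
  have s: "cinner x x = complex_of_real s" using x(1) cinner_self[of x] by (simp only: s_def carrier_vecD)
  moreover have "s \<noteq> 0" using s x cinner_self_eq_0_iff[OF x(1)] by (metis of_real_0)
  moreover have "s \<ge> 0" by (simp add: s_def sum_nonneg)
  ultimately have s: "cinner x x = complex_of_real s" "s > 0" by auto
  have "sqrt s * sqrt s = s" using s(2) by simp
  then have "cinner (complex_of_real (1 / sqrt s) \<cdot>\<^sub>v x) (complex_of_real (1 / sqrt s) \<cdot>\<^sub>v x) = 1"
    using x(1) s by (simp add: cinner_smult_left cinner_smult_right flip: of_real_mult)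
  then show ?thesis by (rule that)
qed

lemma hermitian_partial_eigenbasis:
  assumes H: "hermitian n A"
  shows "k \<le> n \<Longrightarrow> \<exists>U l. U \<in> carrier_mat n k \<and> adj U * U = 1\<^sub>m k \<and> A * U = U * real_diag k l"
proof (induction k)
  case 0
  have A: "A \<in> carrier_mat n n" using H by (simp add: hermitian_def)
  show ?case
    by (rule exI[of _ "0\<^sub>m n 0"], rule exI[of _ "\<lambda>_. 0"]) (use A in \<open>auto intro!: eq_matI\<close>)
next
  case (Suc k)
  have A: "A \<in> carrier_mat n n" using H by (simp add: hermitian_def)
  obtain U l where U: "U \<in> carrier_mat n k" "adj U * U = 1\<^sub>m k" "A * U = U * real_diag k l"
    using Suc by auto
  obtain x \<mu> where x: "x \<in> carrier_vec n" "x \<noteq> 0\<^sub>v n" "adj U *\<^sub>v x = 0\<^sub>v k"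
    "A *\<^sub>v x = complex_of_real \<mu> \<cdot>\<^sub>v x"
    using hermitian_eigenvector_orthogonal_to_isometry[OF H U(1,2) _ U(3)] Suc.prems by auto
  obtain c where c: "cinner (c \<cdot>\<^sub>v x) (c \<cdot>\<^sub>v x) = 1" by (rule unit_multipleE[OF x(1,2)])
  define w where "w = c \<cdot>\<^sub>v x"
  have w: "w \<in> carrier_vec n" "cinner w w = 1" "adj U *\<^sub>v w = 0\<^sub>v k" "A *\<^sub>v w = complex_of_real \<mu> \<cdot>\<^sub>v w"
    using x U(1) A c mult_mat_vec[OF adj_carrier_mat[OF U(1)] x(1)]
    by (auto simp: w_def mult_mat_vec smult_smult_assoc mult.commute)
  show ?case
    using append_col_carrier[OF U(1)] isometry_append_col[OF U(1,2) w(1-3)]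
      mult_append_col_real_diag[OF A U(1,3) w(1,4)] by blast
qed

definition unitary :: "nat \<Rightarrow> complex mat \<Rightarrow> bool" where
  "unitary n W \<longleftrightarrow> W \<in> carrier_mat n n \<and> adj W * W = 1\<^sub>m n \<and> W * adj W = 1\<^sub>m n"

theorem hermitian_spectral:
  assumes H: "hermitian n A"
  obtains W l where "unitary n W" "A = W * real_diag n l * adj W"
proof -
  have A: "A \<in> carrier_mat n n" using H by (simp add: hermitian_def)
  obtain W l where W: "W \<in> carrier_mat n n" "adj W * W = 1\<^sub>m n" "A * W = W * real_diag n l"
    using hermitian_partial_eigenbasis[OF H, of n] by auto
  have WW: "W * adj W = 1\<^sub>m n"
    by (rule mat_mult_left_right_inverse[OF adj_carrier_mat[OF W(1)] W(1) W(2)])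
  have "A = (A * W) * adj W"
    using A W(1) WW by (simp add: assoc_mult_mat[OF A W(1) adj_carrier_mat[OF W(1)]] right_mult_one_mat)
  then show ?thesis using that W WW by (simp add: unitary_def)
qed

section \<open>Positive square roots and the trace norm\<close>

lemma real_diag_mult: "real_diag n a * real_diag n b = real_diag n (\<lambda>j. a j * b j)"
proof (rule eq_matI)
  fix i j assume "i < dim_row (real_diag n (\<lambda>j. a j * b j))" "j < dim_col (real_diag n (\<lambda>j. a j * b j))"
  then show "(real_diag n a * real_diag n b) $$ (i,j) = real_diag n (\<lambda>j. a j * b j) $$ (i,j)"
    by (simp add: scalar_prod_def real_diag_def if_distrib[of "\<lambda>x. x * _"] cong: if_cong)
qed auto

lemma smult_real_diag: "complex_of_real c \<cdot>\<^sub>m real_diag n a = real_diag n (\<lambda>j. c * a j)"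
  by (rule eq_matI) (auto simp: real_diag_def)

lemma mtrace_real_diag: "mtrace (real_diag n a) = complex_of_real (\<Sum>j<n. a j)"
  by (simp add: mtrace_def real_diag_def)

lemma real_diag_mult_vec:
  "y \<in> carrier_vec n \<Longrightarrow> real_diag n l *\<^sub>v y = vec n (\<lambda>j. complex_of_real (l j) * y $ j)"
  by (intro eq_vecI)
    (auto simp: scalar_prod_def real_diag_def if_distrib[of "\<lambda>x. x * _"] cong: if_cong)

context
  fixes n :: nat and W :: "complex mat"
  assumes W: "unitary n W"
begin

lemma unitary_carrier [simp]: "W \<in> carrier_mat n n" "adj W \<in> carrier_mat n n"
  using W by (auto simp: unitary_def)

lemma unitary_cancel [simp]:
  "X \<in> carrier_mat n n \<Longrightarrow> adj W * (W * X) = X"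
  "X \<in> carrier_mat n n \<Longrightarrow> W * (adj W * X) = X"
  "v \<in> carrier_vec n \<Longrightarrow> adj W *\<^sub>v (W *\<^sub>v v) = v"
  "v \<in> carrier_vec n \<Longrightarrow> W *\<^sub>v (adj W *\<^sub>v v) = v"
proof -
  have WW: "adj W * W = 1\<^sub>m n" "W * adj W = 1\<^sub>m n" using W by (auto simp: unitary_def)
  show "adj W * (W * X) = X" "W * (adj W * X) = X" if X: "X \<in> carrier_mat n n"
    using X WW assoc_mult_mat[OF unitary_carrier(2,1) X] assoc_mult_mat[OF unitary_carrier(1,2) X]
    by (metis left_mult_one_mat)+
  show "adj W *\<^sub>v (W *\<^sub>v v) = v" "W *\<^sub>v (adj W *\<^sub>v v) = v" if v: "v \<in> carrier_vec n"
    using v WW assoc_mult_mat_vec[OF unitary_carrier(2,1) v] assoc_mult_mat_vec[OF unitary_carrier(1,2) v]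
    by (metis one_mult_mat_vec)+
qed

lemma unitary_conj_carrier: "A \<in> carrier_mat n n \<Longrightarrow> W * A * adj W \<in> carrier_mat n n"
  by (simp add: square_mat_simps[where n = n])

lemma unitary_conj_mult:
  "A \<in> carrier_mat n n \<Longrightarrow> B \<in> carrier_mat n n \<Longrightarrow>
    (W * A * adj W) * (W * B * adj W) = W * (A * B) * adj W"
  using unitary_carrier by (simp add: square_mat_simps[where n = n])

lemma adj_unitary_conj_real_diag: "adj (W * real_diag n l * adj W) = W * real_diag n l * adj W"
  using adj_mult[of "W * real_diag n l" n n "adj W" n] adj_mult[of W n n "real_diag n l" n]
    unitary_carrier real_diag_carrier[of n l]
  by (simp add: square_mat_simps[where n = n])

lemma smult_unitary_conj_real_diag:
  "complex_of_real c \<cdot>\<^sub>m (W * real_diag n l * adj W) = W * real_diag n (\<lambda>j. c * l j) * adj W"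
proof -
  have "complex_of_real c \<cdot>\<^sub>m (W * real_diag n l * adj W) = (complex_of_real c \<cdot>\<^sub>m (W * real_diag n l)) * adj W"
    by (rule mult_smult_assoc_mat[of _ n n _ n, symmetric]) (auto simp: square_mat_simps[where n = n])
  also have "complex_of_real c \<cdot>\<^sub>m (W * real_diag n l) = W * (complex_of_real c \<cdot>\<^sub>m real_diag n l)"
    by (rule mult_smult_distrib[of _ n n _ n, symmetric]) auto
  finally show ?thesis by (simp only: smult_real_diag)
qed

lemma unitary_cinner:
  "x \<in> carrier_vec n \<Longrightarrow> y \<in> carrier_vec n \<Longrightarrow> cinner (W *\<^sub>v x) (W *\<^sub>v y) = cinner x y"
proof -
  assume x: "x \<in> carrier_vec n" and y: "y \<in> carrier_vec n"
  show ?thesis using cinner_adj[OF unitary_carrier(1) y mult_mat_vec_carrier[OF unitary_carrier(1) x]] x by simp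
qed

lemma cinner_unitary_conj_real_diag:
  assumes y: "y \<in> carrier_vec n"
  shows "cinner (W *\<^sub>v y) ((W * real_diag n l * adj W) *\<^sub>v (W *\<^sub>v y))
    = complex_of_real (\<Sum>j<n. l j * (cmod (y $ j))\<^sup>2)"
proof -
  have "(W * real_diag n l * adj W) *\<^sub>v (W *\<^sub>v y) = W *\<^sub>v (real_diag n l *\<^sub>v y)"
    using unitary_carrier real_diag_carrier[of n l] y by (simp add: square_mat_simps[where n = n])
  then have "cinner (W *\<^sub>v y) ((W * real_diag n l * adj W) *\<^sub>v (W *\<^sub>v y))
      = cinner y (real_diag n l *\<^sub>v y)"
    using unitary_cinner[OF y mult_mat_vec_carrier[OF real_diag_carrier y]] by simp
  also have "\<dots> = (\<Sum>j<n. cnj (y $ j) * (complex_of_real (l j) * y $ j))"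
    using y by (simp add: cinner_def real_diag_mult_vec)
  also have "\<dots> = complex_of_real (\<Sum>j<n. l j * (cmod (y $ j))\<^sup>2)"
    unfolding of_real_sum by (intro sum.cong refl) (metis cnj_mult_self mult.left_commute of_real_mult)
  finally show ?thesis .
qed

lemma cinner_unitary_conj_real_diag_unit_vec:
  assumes j: "j < n"
  shows "cinner (W *\<^sub>v unit_vec n j) ((W * real_diag n l * adj W) *\<^sub>v (W *\<^sub>v unit_vec n j))
    = complex_of_real (l j)"
proof -
  have "(\<Sum>i<n. l i * (cmod (unit_vec n j $ i))\<^sup>2) = (\<Sum>i<n. if i = j then l j else 0)"
    by (intro sum.cong) (auto simp: unit_vec_def)
  then show ?thesis using j by (simp add: cinner_unitary_conj_real_diag)
qed

lemma psd_unitary_conj_real_diag_iff: "psd n (W * real_diag n l * adj W) \<longleftrightarrow> (\<forall>j<n. l j \<ge> 0)"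
proof
  assume P: "psd n (W * real_diag n l * adj W)"
  show "\<forall>j<n. l j \<ge> 0"
  proof (intro allI impI)
    fix j assume j: "j < n"
    note cinner_unitary_conj_real_diag_unit_vec[OF j, of l]
    moreover have "W *\<^sub>v unit_vec n j \<in> carrier_vec n" by (simp add: square_mat_simps[where n = n])
    ultimately show "l j \<ge> 0" using P unfolding psd_iff_cinner by force
  qed
next
  assume l: "\<forall>j<n. l j \<ge> 0"
  show "psd n (W * real_diag n l * adj W)" unfolding psd_iff_cinner
  proof (intro conjI ballI unitary_conj_carrier real_diag_carrier)
    fix v :: "complex vec" assume v: "v \<in> carrier_vec n"
    have "cinner v ((W * real_diag n l * adj W) *\<^sub>v v)
      = complex_of_real (\<Sum>j<n. l j * (cmod ((adj W *\<^sub>v v) $ j))\<^sup>2)"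
      using cinner_unitary_conj_real_diag[OF mult_mat_vec_carrier[OF unitary_carrier(2) v], of l] v by simp
    then show "Im (cinner v ((W * real_diag n l * adj W) *\<^sub>v v)) = 0"
      "Re (cinner v ((W * real_diag n l * adj W) *\<^sub>v v)) \<ge> 0"
      using l by (auto intro!: sum_nonneg)
  qed
qed

lemma mtrace_eq_sum_cinner:
  assumes A: "A \<in> carrier_mat n n"
  shows "mtrace A = (\<Sum>j<n. cinner (W *\<^sub>v unit_vec n j) (A *\<^sub>v (W *\<^sub>v unit_vec n j)))"
proof -
  have "cinner (W *\<^sub>v unit_vec n j) (A *\<^sub>v (W *\<^sub>v unit_vec n j)) = (adj W * A * W) $$ (j,j)"
    if j: "j < n" for j
  proof -
    define z where "z = A *\<^sub>v (W *\<^sub>v unit_vec n j)"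
    have z: "z \<in> carrier_vec n" "adj W *\<^sub>v z = (adj W * A * W) *\<^sub>v unit_vec n j"
      using A by (simp_all add: z_def square_mat_simps[where n = n])
    have "cinner (W *\<^sub>v unit_vec n j) z = cinner (W *\<^sub>v unit_vec n j) (W *\<^sub>v (adj W *\<^sub>v z))"
      using unitary_cancel(4)[OF z(1)] by simp
    also have "\<dots> = cinner (unit_vec n j) ((adj W * A * W) *\<^sub>v unit_vec n j)"
      using z unitary_cinner[OF unit_vec_carrier mult_mat_vec_carrier[OF unitary_carrier(2) z(1)]] by simp
    finally have "cinner (W *\<^sub>v unit_vec n j) (A *\<^sub>v (W *\<^sub>v unit_vec n j))
        = cinner (unit_vec n j) ((adj W * A * W) *\<^sub>v unit_vec n j)"
      by (simp add: z_def)
    also have "\<dots> = ((adj W * A * W) *\<^sub>v unit_vec n j) $ j" by (rule cinner_unit_vec[OF j])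
    also have "\<dots> = (adj W * A * W) $$ (j,j)"
      using A by (intro index_mult_mat_vec_unit_vec[of _ n n] j) (simp add: square_mat_simps[where n = n])
    finally show ?thesis .
  qed
  then have "(\<Sum>j<n. cinner (W *\<^sub>v unit_vec n j) (A *\<^sub>v (W *\<^sub>v unit_vec n j)))
      = (\<Sum>j<n. (adj W * A * W) $$ (j,j))"
    by (intro sum.cong) auto
  also have "\<dots> = mtrace (adj W * A * W)"
    using carrier_matD[OF unitary_carrier(1)] by (simp add: mtrace_def del: index_mult_mat(1))
  also have "\<dots> = mtrace A" using mtrace_similar[of "adj W" n W A] W A by (simp add: unitary_def)
  finally show ?thesis by simp
qed

end

lemma psd_cinner_eq_0_imp_kernel:
  assumes P: "psd n B" and u: "u \<in> carrier_vec n" and q: "cinner u (B *\<^sub>v u) = 0"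
  shows "B *\<^sub>v u = 0\<^sub>v n"
proof -
  obtain W l where W: "unitary n W" and B: "B = W * real_diag n l * adj W"
    using hermitian_spectral[OF psd_hermitian[OF P]] .
  note C = unitary_carrier[OF W]
  have l: "\<forall>j<n. l j \<ge> 0" using P psd_unitary_conj_real_diag_iff[OF W] B by simp
  define y where "y = adj W *\<^sub>v u"
  have y: "y \<in> carrier_vec n" "W *\<^sub>v y = u" using u W C by (auto simp: y_def square_mat_simps[where n = n])
  have "(\<Sum>j<n. l j * (cmod (y $ j))\<^sup>2) = 0"
    using cinner_unitary_conj_real_diag[OF W y(1), of l] q y(2) B by (metis of_real_eq_0_iff)
  then have "\<forall>j<n. l j * (cmod (y $ j))\<^sup>2 = 0"
    using l by (subst (asm) sum_nonneg_eq_0_iff) auto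
  then have "real_diag n l *\<^sub>v y = 0\<^sub>v n"
    using y(1) by (auto simp: real_diag_mult_vec vec_eq_iff)
  then show ?thesis
    using C y u by (simp add: B y_def square_mat_simps[where n = n])
qed

lemma mult_diff_plus_diff_mult:
  fixes B C :: "complex mat"
  assumes B: "B \<in> carrier_mat n n" and C: "C \<in> carrier_mat n n"
  shows "B * (B - C) + (B - C) * C = B * B - C * C"
proof (rule eq_matI)
  fix i j assume "i < dim_row (B * B - C * C)" "j < dim_col (B * B - C * C)"
  then show "(B * (B - C) + (B - C) * C) $$ (i,j) = (B * B - C * C) $$ (i,j)"
    using B C by (simp add: scalar_prod_def algebra_simps sum_subtractf)
qed (use B C in auto)

text \<open>If \<open>B\<^sup>2 = C\<^sup>2\<close>, then \<open>B (B - C) + (B - C) C = 0\<close>; evaluated on an eigenvector \<open>u\<close> of \<open>B - C\<close>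
  with eigenvalue \<open>\<mu> \<noteq> 0\<close> this gives \<open>\<mu> (\<langle>u, B u\<rangle> + \<langle>u, C u\<rangle>) = 0\<close>, so \<open>u\<close> lies in both kernels,
  contradicting \<open>(B - C) u = \<mu> u\<close>.\<close>

lemma psd_same_square_eigenvalue_diff_eq_0:
  assumes PB: "psd n B" and PC: "psd n C" and BC: "B * B = C * C" and ev: "eigenvector (B - C) u \<mu>"
  shows "\<mu> = 0"
proof (rule ccontr)
  assume \<mu>: "\<mu> \<noteq> 0"
  have B: "B \<in> carrier_mat n n" "adj B = B" and C: "C \<in> carrier_mat n n" "adj C = C"
    using psd_hermitian[OF PB] psd_hermitian[OF PC] by (auto simp: hermitian_def)
  define D where "D = B - C"
  have D: "hermitian n D" using B C by (simp add: hermitian_def D_def adj_minus[of _ n n] minus_carrier_mat)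
  have u: "u \<in> carrier_vec n" "u \<noteq> 0\<^sub>v n" and Du: "D *\<^sub>v u = \<mu> \<cdot>\<^sub>v u"
    using ev B C by (auto simp: eigenvector_def D_def)
  have real: "cnj \<mu> = \<mu>"
    using hermitian_eigenvalue_real[OF D ev[folded D_def]] by (metis complex_cnj_complex_of_real)
  have "B * D + D * C = 0\<^sub>m n n" using mult_diff_plus_diff_mult[OF B(1) C(1)] BC B C by (simp add: D_def)
  moreover have "(B * D + D * C) *\<^sub>v u = B *\<^sub>v (D *\<^sub>v u) + D *\<^sub>v (C *\<^sub>v u)"
    using B C u D by (simp add: hermitian_def add_mult_distrib_mat_vec[of _ n n] square_mat_simps[where n = n])
  moreover have "cinner u (0\<^sub>v n) = 0" using u by (metis carrier_vecD cinner_zero_right)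
  ultimately have "0 = cinner u (B *\<^sub>v (D *\<^sub>v u) + D *\<^sub>v (C *\<^sub>v u))" using u by simp
  also have "\<dots> = cinner u (B *\<^sub>v (D *\<^sub>v u)) + cinner u (D *\<^sub>v (C *\<^sub>v u))"
    using B C D u by (intro cinner_add_right) (auto simp: hermitian_def)
  also have "\<dots> = \<mu> * (cinner u (B *\<^sub>v u) + cinner u (C *\<^sub>v u))"
    using cinner_adj[of D n n "C *\<^sub>v u" u] D B C u Du real
    by (simp add: hermitian_def mult_mat_vec cinner_smult_right cinner_smult_left distrib_left)
  finally have sum0: "cinner u (B *\<^sub>v u) + cinner u (C *\<^sub>v u) = 0" using \<mu> by simp
  have "Re (cinner u (B *\<^sub>v u)) \<ge> 0" "Re (cinner u (C *\<^sub>v u)) \<ge> 0"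
    "Im (cinner u (B *\<^sub>v u)) = 0" "Im (cinner u (C *\<^sub>v u)) = 0"
    using PB PC u by (auto simp: psd_iff_cinner)
  with sum0 have "cinner u (B *\<^sub>v u) = 0" "cinner u (C *\<^sub>v u) = 0"
    by (auto simp: complex_eq_iff)
  then have "D *\<^sub>v u = 0\<^sub>v n"
    using psd_cinner_eq_0_imp_kernel[OF PB u(1)] psd_cinner_eq_0_imp_kernel[OF PC u(1)] B C u
    by (simp add: D_def minus_mult_distrib_mat_vec)
  then have "\<mu> \<cdot>\<^sub>v u = 0\<^sub>v n" using Du by simp
  then show False using \<mu> u by (auto simp: vec_eq_iff)
qed

lemma psd_sqrt_unique:
  assumes PB: "psd n B" and PC: "psd n C" and BC: "B * B = C * C"
  shows "B = C"
proof -
  have B: "B \<in> carrier_mat n n" "adj B = B" and C: "C \<in> carrier_mat n n" "adj C = C"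
    using psd_hermitian[OF PB] psd_hermitian[OF PC] by (auto simp: hermitian_def)
  have "hermitian n (B - C)" using B C by (simp add: hermitian_def adj_minus[of _ n n] minus_carrier_mat)
  then have "B - C = 0\<^sub>m n n"
    using hermitian_eq_0_if_eigenvalues_0 psd_same_square_eigenvalue_diff_eq_0[OF PB PC BC]
    by (metis eigenvalue_def)
  show ?thesis
  proof (rule eq_matI)
    fix i j assume ij: "i < dim_row C" "j < dim_col C"
    then have "(B - C) $$ (i,j) = 0" using \<open>B - C = 0\<^sub>m n n\<close> C by simp
    then show "B $$ (i,j) = C $$ (i,j)" using ij by simp
  qed (use B C in auto)
qed

lemma mat_sqrt_eqI: "psd n B \<Longrightarrow> B * B = P \<Longrightarrow> mat_sqrt n P = B"
  unfolding mat_sqrt_def using psd_sqrt_unique by (intro the_equality) auto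

lemma trace_norm_unitary_conj_real_diag:
  assumes W: "unitary n W"
  shows "trace_norm (W * real_diag n l * adj W) = (\<Sum>j<n. \<bar>l j\<bar>)"
proof -
  note C = unitary_carrier[OF W]
  define M where "M = W * real_diag n l * adj W"
  define B where "B = W * real_diag n (\<lambda>j. \<bar>l j\<bar>) * adj W"
  have "adj M * M = W * real_diag n (\<lambda>j. l j * l j) * adj W"
    by (simp add: M_def adj_unitary_conj_real_diag[OF W] unitary_conj_mult[OF W] real_diag_mult)
  also have "\<dots> = B * B"
    by (simp add: B_def unitary_conj_mult[OF W] real_diag_mult abs_mult_self_eq)
  finally have "mat_sqrt n (adj M * M) = B"
    using mat_sqrt_eqI[of n B] psd_unitary_conj_real_diag_iff[OF W, of "\<lambda>j. \<bar>l j\<bar>"] by (simp add: B_def)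
  moreover have "mtrace B = complex_of_real (\<Sum>j<n. \<bar>l j\<bar>)"
    using mtrace_similar[OF C, of "real_diag n _"] W by (simp add: B_def unitary_def mtrace_real_diag)
  moreover have "dim_col M = n" using C by (simp add: M_def)
  ultimately show ?thesis by (simp add: trace_norm_def M_def)
qed

lemma sum_abs_eigenvalues_density_diff_le:
  assumes R: "density n \<rho>" and S: "density n \<sigma>"
    and W: "unitary n W" and D: "\<rho> - \<sigma> = W * real_diag n l * adj W"
  shows "(\<Sum>j<n. \<bar>l j\<bar>) \<le> 2"
proof -
  have P: "psd n \<rho>" "psd n \<sigma>" and tr: "mtrace \<rho> = 1" "mtrace \<sigma> = 1"
    using R S by (auto simp: density_def)
  have C: "\<rho> \<in> carrier_mat n n" "\<sigma> \<in> carrier_mat n n" using P by (auto simp: psd_def)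
  define u where "u j = W *\<^sub>v unit_vec n j" for j
  have u: "u j \<in> carrier_vec n" for j using W by (simp add: u_def unitary_def square_mat_simps[where n = n])
  have q: "Im (cinner (u j) (A *\<^sub>v u j)) = 0" "Re (cinner (u j) (A *\<^sub>v u j)) \<ge> 0"
    if "psd n A" for A j using that u by (auto simp: psd_iff_cinner)
  have "complex_of_real (l j) = cinner (u j) (\<rho> *\<^sub>v u j) - cinner (u j) (\<sigma> *\<^sub>v u j)" if j: "j < n" for j
  proof -
    have "complex_of_real (l j) = cinner (u j) ((\<rho> - \<sigma>) *\<^sub>v u j)"
      using cinner_unitary_conj_real_diag_unit_vec[OF W j, of l] by (simp add: u_def D)
    also have "\<dots> = cinner (u j) (\<rho> *\<^sub>v u j) - cinner (u j) (\<sigma> *\<^sub>v u j)"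
      using C u[of j] by (simp add: minus_mult_distrib_mat_vec cinner_diff_right carrier_vecD)
    finally show ?thesis .
  qed
  then have "\<bar>l j\<bar> \<le> Re (cinner (u j) (\<rho> *\<^sub>v u j)) + Re (cinner (u j) (\<sigma> *\<^sub>v u j))" if "j < n" for j
    using that q[OF P(1), of j] q[OF P(2), of j] by (fastforce dest: arg_cong[where f = Re])
  then have "(\<Sum>j<n. \<bar>l j\<bar>) \<le> (\<Sum>j<n. Re (cinner (u j) (\<rho> *\<^sub>v u j)) + Re (cinner (u j) (\<sigma> *\<^sub>v u j)))"
    by (intro sum_mono) auto
  also have "\<dots> = Re (mtrace \<rho>) + Re (mtrace \<sigma>)"
    unfolding sum.distrib mtrace_eq_sum_cinner[OF W C(1)] mtrace_eq_sum_cinner[OF W C(2)]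
    by (simp add: u_def)
  finally show ?thesis using tr by simp
qed

lemma trace_norm_density_diff_le:
  assumes R: "density n \<rho>" and S: "density n \<sigma>"
  shows "trace_norm (complex_of_real c \<cdot>\<^sub>m (\<rho> - \<sigma>)) \<le> 2 * \<bar>c\<bar>"
proof -
  have "hermitian n \<rho>" "hermitian n \<sigma>"
    using R S psd_hermitian by (auto simp: density_def)
  then have "hermitian n (\<rho> - \<sigma>)" by (simp add: hermitian_def adj_minus[of _ n n] minus_carrier_mat)
  then obtain W l where W: "unitary n W" and D: "\<rho> - \<sigma> = W * real_diag n l * adj W"
    by (rule hermitian_spectral)
  have "trace_norm (complex_of_real c \<cdot>\<^sub>m (\<rho> - \<sigma>)) = \<bar>c\<bar> * (\<Sum>j<n. \<bar>l j\<bar>)"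
    unfolding D smult_unitary_conj_real_diag[OF W] trace_norm_unitary_conj_real_diag[OF W]
    by (simp add: abs_mult sum_distrib_left)
  also have "\<dots> \<le> \<bar>c\<bar> * 2"
    using sum_abs_eigenvalues_density_diff_le[OF R S W D] by (simp add: mult_left_mono)
  finally show ?thesis by (simp add: mult.commute)
qed

section \<open>Rank-one projections\<close>

definition ket_bra :: "complex vec \<Rightarrow> complex vec \<Rightarrow> complex mat" where
  "ket_bra u w = mat (dim_vec u) (dim_vec w) (\<lambda>(i,j). u $ i * cnj (w $ j))"

lemma ket_bra_carrier [simp]: "u \<in> carrier_vec n \<Longrightarrow> w \<in> carrier_vec m \<Longrightarrow> ket_bra u w \<in> carrier_mat n m"
  by (simp add: ket_bra_def)

lemma dim_ket_bra [simp]: "dim_row (ket_bra u w) = dim_vec u" "dim_col (ket_bra u w) = dim_vec w"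
  by (simp_all add: ket_bra_def)

lemma adj_ket_bra: "adj (ket_bra u w) = ket_bra w u"
  by (rule eq_matI) (auto simp: ket_bra_def)

lemma ket_bra_mult_vec: "dim_vec v = dim_vec w \<Longrightarrow> ket_bra u w *\<^sub>v v = cinner w v \<cdot>\<^sub>v u"
  by (intro eq_vecI) (auto simp: ket_bra_def cinner_def scalar_prod_def lessThan_atLeast0
      sum_distrib_left mult.commute mult.left_commute)

lemma ket_bra_mult: "dim_vec v = dim_vec w \<Longrightarrow> ket_bra u v * ket_bra w x = cinner v w \<cdot>\<^sub>m ket_bra u x"
  by (intro eq_matI) (auto simp: ket_bra_def cinner_def scalar_prod_def lessThan_atLeast0
      sum_distrib_left mult.commute mult.left_commute)

lemma mtrace_ket_bra: "dim_vec w = dim_vec u \<Longrightarrow> mtrace (ket_bra u w) = cinner w u"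
  by (simp add: mtrace_def ket_bra_def cinner_def mult.commute)

lemma psd_ket_bra: assumes u: "u \<in> carrier_vec n" shows "psd n (ket_bra u u)"
  unfolding psd_iff_cinner
proof (intro conjI ballI ket_bra_carrier u)
  fix v :: "complex vec" assume v: "v \<in> carrier_vec n"
  have "cinner v (ket_bra u u *\<^sub>v v) = complex_of_real ((cmod (cinner u v))\<^sup>2)"
    using u v by (simp add: ket_bra_mult_vec cinner_smult_right cinner_commute[of v u] flip: complex_norm_square)
  then show "Im (cinner v (ket_bra u u *\<^sub>v v)) = 0" "Re (cinner v (ket_bra u u *\<^sub>v v)) \<ge> 0"
    by simp_all
qed

lemma density_ket_bra: "u \<in> carrier_vec n \<Longrightarrow> cinner u u = 1 \<Longrightarrow> density n (ket_bra u u)"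
  by (simp add: density_def psd_ket_bra mtrace_ket_bra)

lemma smult_add_mult_orthogonal_idempotents:
  fixes P Q :: "complex mat"
  assumes P: "P \<in> carrier_mat n n" and Q: "Q \<in> carrier_mat n n"
    and PP: "P * P = P" and QQ: "Q * Q = Q" and PQ: "P * Q = 0\<^sub>m n n" and QP: "Q * P = 0\<^sub>m n n"
  shows "(a \<cdot>\<^sub>m P + b \<cdot>\<^sub>m Q) * (a' \<cdot>\<^sub>m P + b' \<cdot>\<^sub>m Q) = (a * a') \<cdot>\<^sub>m P + (b * b') \<cdot>\<^sub>m Q"
proof -
  have "(a \<cdot>\<^sub>m P + b \<cdot>\<^sub>m Q) * (a' \<cdot>\<^sub>m P + b' \<cdot>\<^sub>m Q)
      = (a \<cdot>\<^sub>m P) * (a' \<cdot>\<^sub>m P) + (b \<cdot>\<^sub>m Q) * (a' \<cdot>\<^sub>m P)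
        + ((a \<cdot>\<^sub>m P) * (b' \<cdot>\<^sub>m Q) + (b \<cdot>\<^sub>m Q) * (b' \<cdot>\<^sub>m Q))"
    using P Q by (simp add: add_mult_distrib_mat[of _ n n _ _ n] mult_add_distrib_mat[of _ n n _ n])
  also have "\<dots> = a' \<cdot>\<^sub>m (a \<cdot>\<^sub>m P) + b' \<cdot>\<^sub>m (b \<cdot>\<^sub>m Q)"
    using P Q by (simp add: mult_smult_assoc_mat[of _ n n _ n] mult_smult_distrib[of _ n n _ n] PP QQ PQ QP)
  also have "\<dots> = (a * a') \<cdot>\<^sub>m P + (b * b') \<cdot>\<^sub>m Q"
    using P Q by (auto intro!: eq_matI)
  finally show ?thesis .
qed

text \<open>For orthonormal \<open>u, w\<close> the square root of \<open>M\<^sup>2\<close>, \<open>M = c (|u\<rangle>\<langle>u| - |w\<rangle>\<langle>w|)\<close>, is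
  \<open>\<bar>c\<bar> (|u\<rangle>\<langle>u| + |w\<rangle>\<langle>w|)\<close>.\<close>

lemma trace_norm_ket_bra_diff:
  assumes u: "u \<in> carrier_vec n" "cinner u u = 1" and w: "w \<in> carrier_vec n" "cinner w w = 1"
    and uw: "cinner u w = 0"
  shows "trace_norm (complex_of_real c \<cdot>\<^sub>m (ket_bra u u - ket_bra w w)) = 2 * \<bar>c\<bar>"
proof -
  define P Q where "P = ket_bra u u" and "Q = ket_bra w w"
  have PQ: "P \<in> carrier_mat n n" "Q \<in> carrier_mat n n" using u w by (simp_all add: P_def Q_def)
  have wu: "cinner w u = 0" using uw u w cinner_commute[of u w] by simp
  have prod: "P * P = P" "Q * Q = Q" "P * Q = 0\<^sub>m n n" "Q * P = 0\<^sub>m n n"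
    using u w uw wu PQ by (auto simp: P_def Q_def ket_bra_mult intro!: eq_matI)
  note mult = smult_add_mult_orthogonal_idempotents[OF PQ prod]
  define M where "M = complex_of_real c \<cdot>\<^sub>m (P - Q)"
  define B where "B = complex_of_real \<bar>c\<bar> \<cdot>\<^sub>m P + complex_of_real \<bar>c\<bar> \<cdot>\<^sub>m Q"
  have M: "M = complex_of_real c \<cdot>\<^sub>m P + (- complex_of_real c) \<cdot>\<^sub>m Q" "dim_col M = n"
    using PQ by (auto simp: M_def right_diff_distrib intro!: eq_matI)
  have "adj M = M" using PQ by (simp add: M_def adj_smult adj_minus[of _ n n] P_def Q_def adj_ket_bra)
  then have "adj M * M = (complex_of_real c * complex_of_real c) \<cdot>\<^sub>m P + (complex_of_real c * complex_of_real c) \<cdot>\<^sub>m Q"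
    unfolding M(1) by (simp add: mult)
  also have "\<dots> = B * B"
    unfolding B_def mult by (simp flip: of_real_mult)
  finally have "adj M * M = B * B" .
  moreover have "psd n B"
    unfolding B_def P_def Q_def using u w by (intro psd_add psd_smult_real psd_ket_bra) auto
  ultimately have "mat_sqrt n (adj M * M) = B" using mat_sqrt_eqI by simp
  moreover have "mtrace B = complex_of_real (2 * \<bar>c\<bar>)"
    using u w PQ by (simp add: B_def P_def Q_def mtrace_add[of _ n] mtrace_smult[of _ n] mtrace_ket_bra)
  ultimately show ?thesis using w(1) by (simp add: trace_norm_def M_def P_def Q_def carrier_vecD)
qed

section \<open>The dephasing channel\<close>

definition root_of_unity :: "nat \<Rightarrow> nat \<Rightarrow> complex" where
  "root_of_unity d k = cis (2 * pi * real k / real d)"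

lemma cnj_mult_root_of_unity [simp]: "cnj (root_of_unity d k) * root_of_unity d k = 1"
  by (simp add: root_of_unity_def cis_cnj cis_mult)

lemma sum_roots_of_unity:
  assumes d: "d \<ge> 2" shows "(\<Sum>k<d. root_of_unity d k) = 0"
proof -
  define \<zeta> where "\<zeta> = cis (2 * pi / real d)"
  have pow: "root_of_unity d k = \<zeta> ^ k" for k
    unfolding root_of_unity_def \<zeta>_def DeMoivre by (simp add: field_simps)
  have "\<zeta> \<noteq> 1"
  proof
    assume "\<zeta> = 1"
    then have "sin (2 * pi / real d) = 0" "cos (2 * pi / real d) = 1"
      unfolding \<zeta>_def by (metis cis.simps(2) one_complex.sel(2), metis cis.simps(1) one_complex.sel(1))
    moreover have "0 < 2 * pi / real d" "2 * pi / real d \<le> pi" using d by (simp_all add: field_simps)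
    ultimately show False using sin_gt_zero[of "2 * pi / real d"] cos_pi
      by (cases "2 * pi / real d = pi") auto
  qed
  moreover have "\<zeta> ^ d = 1" unfolding \<zeta>_def DeMoivre using d by simp
  ultimately show ?thesis using geometric_sum[of \<zeta> d] by (simp add: pow)
qed

definition phase_conj :: "nat \<Rightarrow> (nat \<Rightarrow> complex) \<Rightarrow> complex mat \<Rightarrow> complex mat" where
  "phase_conj n z \<rho> = mat n n (\<lambda>(i,j). z i * \<rho> $$ (i,j) * cnj (z j))"

lemma phase_conj_ket_bra:
  "u \<in> carrier_vec n \<Longrightarrow> phase_conj n z (ket_bra u u) = ket_bra (vec n (\<lambda>i. z i * u $ i)) (vec n (\<lambda>i. z i * u $ i))"
  by (intro eq_matI) (auto simp: phase_conj_def ket_bra_def)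

lemma density_phase_conj:
  assumes R: "density n \<rho>" and z: "\<And>i. cnj (z i) * z i = 1"
  shows "density n (phase_conj n z \<rho>)"
proof -
  have P: "psd n \<rho>" and t: "mtrace \<rho> = 1" using R by (auto simp: density_def)
  have C: "\<rho> \<in> carrier_mat n n" and PC: "phase_conj n z \<rho> \<in> carrier_mat n n"
    using P by (auto simp: psd_def phase_conj_def)
  have "psd n (phase_conj n z \<rho>)" unfolding psd_iff_cinner
  proof (intro conjI ballI PC)
    fix v :: "complex vec" assume v: "v \<in> carrier_vec n"
    define w where "w = vec n (\<lambda>j. cnj (z j) * v $ j)"
    have w: "w \<in> carrier_vec n" by (simp add: w_def)
    have "cinner v (phase_conj n z \<rho> *\<^sub>v v) = cinner w (\<rho> *\<^sub>v w)"
      unfolding cinner_mult_vec_double_sum[OF PC v] cinner_mult_vec_double_sum[OF C w]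
      by (intro sum.cong refl) (simp add: phase_conj_def w_def mult.commute mult.left_commute)
    then show "Im (cinner v (phase_conj n z \<rho> *\<^sub>v v)) = 0" "Re (cinner v (phase_conj n z \<rho> *\<^sub>v v)) \<ge> 0"
      using P w by (auto simp: psd_iff_cinner)
  qed
  moreover have "mtrace (phase_conj n z \<rho>) = mtrace \<rho>"
    unfolding mtrace_def phase_conj_def using C z
    by (intro sum.cong) (auto simp: mult.commute mult.left_commute)
  ultimately show ?thesis using t by (simp add: density_def)
qed

lemma Zop_conj:
  assumes M: "M \<in> carrier_mat d d"
  shows "Zop d * M * adj (Zop d) = phase_conj d (root_of_unity d) M"
proof (rule eq_matI)
  fix i j assume "i < dim_row (phase_conj d (root_of_unity d) M)" "j < dim_col (phase_conj d (root_of_unity d) M)"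
  then have i: "i < d" and j: "j < d" by (auto simp: phase_conj_def)
  have Z: "Zop d \<in> carrier_mat d d" "\<And>a b. a < d \<Longrightarrow> b < d \<Longrightarrow> Zop d $$ (a,b) = (if a = b then root_of_unity d a else 0)"
    by (auto simp: Zop_def root_of_unity_def)
  have ZM: "(Zop d * M) $$ (i,k) = root_of_unity d i * M $$ (i,k)" if k: "k < d" for k
  proof -
    have "(Zop d * M) $$ (i,k) = (\<Sum>t\<in>{0..<d}. Zop d $$ (i,t) * M $$ (t,k))"
      using i k Z M by (simp add: scalar_prod_def)
    also have "\<dots> = (\<Sum>t\<in>{0..<d}. if i = t then root_of_unity d i * M $$ (t,k) else 0)"
      by (rule sum.cong) (auto simp: Z i)
    finally show ?thesis using i by simp
  qed
  have "(Zop d * M * adj (Zop d)) $$ (i,j) = (\<Sum>k\<in>{0..<d}. (Zop d * M) $$ (i,k) * cnj (Zop d $$ (j,k)))"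
    using i j Z M by (simp add: scalar_prod_def)
  also have "\<dots> = (\<Sum>k\<in>{0..<d}. if j = k then root_of_unity d i * M $$ (i,k) * cnj (root_of_unity d j) else 0)"
    by (rule sum.cong) (auto simp: Z j ZM)
  also have "\<dots> = phase_conj d (root_of_unity d) M $$ (i,j)" using i j by (simp add: phase_conj_def)
  finally show "(Zop d * M * adj (Zop d)) $$ (i,j) = phase_conj d (root_of_unity d) M $$ (i,j)" .
qed (auto simp: phase_conj_def Zop_def)

lemma dephasing_index:
  assumes M: "M \<in> carrier_mat d d" and a: "a < d" and b: "b < d"
  shows "dephasing d r M $$ (a,b)
    = complex_of_real r * M $$ (a,b) + complex_of_real (1 - r) * (root_of_unity d a * M $$ (a,b) * cnj (root_of_unity d b))"
  using M a b Zop_conj[OF M] by (simp add: dephasing_def phase_conj_def)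

lemma dephasing_carrier [simp]: "M \<in> carrier_mat d d \<Longrightarrow> dephasing d r M \<in> carrier_mat d d"
  by (simp add: dephasing_def Zop_conj phase_conj_def)

lemma dim_dephasing [simp]:
  "M \<in> carrier_mat d d \<Longrightarrow> dim_row (dephasing d r M) = d"
  "M \<in> carrier_mat d d \<Longrightarrow> dim_col (dephasing d r M) = d"
  using dephasing_carrier by (blast dest: carrier_matD)+

lemma dephasing_diff:
  assumes R: "\<rho> \<in> carrier_mat d d"
  shows "dephasing d r1 \<rho> - dephasing d r2 \<rho>
    = complex_of_real (r1 - r2) \<cdot>\<^sub>m (\<rho> - phase_conj d (root_of_unity d) \<rho>)"
  using R by (intro eq_matI) (auto simp: dephasing_index phase_conj_def algebra_simps)

lemma tensor_id_dephasing_diff: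
  assumes R: "\<rho> \<in> carrier_mat (d * d') (d * d')"
  shows "tensor_id (dephasing d r1) d d' \<rho> - tensor_id (dephasing d r2) d d' \<rho>
    = complex_of_real (r1 - r2) \<cdot>\<^sub>m (\<rho> - phase_conj (d * d') (\<lambda>i. root_of_unity d (i div d')) \<rho>)"
proof (rule eq_matI)
  fix i j assume "i < dim_row (complex_of_real (r1 - r2) \<cdot>\<^sub>m (\<rho> - phase_conj (d * d') (\<lambda>i. root_of_unity d (i div d')) \<rho>))"
    "j < dim_col (complex_of_real (r1 - r2) \<cdot>\<^sub>m (\<rho> - phase_conj (d * d') (\<lambda>i. root_of_unity d (i div d')) \<rho>))"
  then have i: "i < d * d'" and j: "j < d * d'" using R by (auto simp: phase_conj_def)
  then have a: "i div d' < d" and b: "j div d' < d" by (simp_all add: less_mult_imp_div_less mult.commute)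
  define M where "M = mat d d (\<lambda>(a,b). \<rho> $$ (a * d' + i mod d', b * d' + j mod d'))"
  have M: "M \<in> carrier_mat d d" "M $$ (i div d', j div d') = \<rho> $$ (i,j)"
    using a b by (simp_all add: M_def)
  have "tensor_id (dephasing d r) d d' \<rho> $$ (i,j) = dephasing d r M $$ (i div d', j div d')" for r
    using i j by (simp add: tensor_id_def M_def)
  then show "(tensor_id (dephasing d r1) d d' \<rho> - tensor_id (dephasing d r2) d d' \<rho>) $$ (i,j)
      = (complex_of_real (r1 - r2) \<cdot>\<^sub>m (\<rho> - phase_conj (d * d') (\<lambda>i. root_of_unity d (i div d')) \<rho>)) $$ (i,j)"
    using i j R M a b by (simp add: tensor_id_def dephasing_index phase_conj_def algebra_simps)
qed (use R in \<open>auto simp: phase_conj_def tensor_id_def\<close>)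

lemma succ_single_dephasing_le:
  assumes "density d \<rho>"
  shows "succ_single (dephasing d r1) (dephasing d r2) \<rho> \<le> 1/2 + \<bar>r1 - r2\<bar> / 2"
proof -
  have "\<rho> \<in> carrier_mat d d" using assms by (simp add: density_def psd_def)
  moreover have "density d (phase_conj d (root_of_unity d) \<rho>)" by (rule density_phase_conj[OF assms]) simp
  ultimately have "trace_norm (dephasing d r1 \<rho> - dephasing d r2 \<rho>) \<le> 2 * \<bar>r1 - r2\<bar>"
    using trace_norm_density_diff_le[OF assms, of _ "r1 - r2"] by (simp only: dephasing_diff)
  then show ?thesis unfolding succ_single_def by linarith
qed

lemma succ_general_dephasing_le:
  assumes "density (d * d') \<rho>"
  shows "succ_general (dephasing d r1) (dephasing d r2) d d' \<rho> \<le> 1/2 + \<bar>r1 - r2\<bar> / 2"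
proof -
  have "\<rho> \<in> carrier_mat (d * d') (d * d')" using assms by (simp add: density_def psd_def)
  moreover have "density (d * d') (phase_conj (d * d') (\<lambda>i. root_of_unity d (i div d')) \<rho>)"
    by (rule density_phase_conj[OF assms]) simp
  ultimately have "trace_norm (tensor_id (dephasing d r1) d d' \<rho> - tensor_id (dephasing d r2) d d' \<rho>)
      \<le> 2 * \<bar>r1 - r2\<bar>"
    using trace_norm_density_diff_le[OF assms, of _ "r1 - r2"] by (simp only: tensor_id_dephasing_diff)
  then show ?thesis unfolding succ_general_def by linarith
qed

definition uniform_vec :: "nat \<Rightarrow> complex vec" where
  "uniform_vec d = vec d (\<lambda>_. complex_of_real (1 / sqrt (real d)))"

lemma cinner_uniform_vec: "d > 0 \<Longrightarrow> cinner (uniform_vec d) (uniform_vec d) = 1"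
  by (simp add: uniform_vec_def cinner_def mult.assoc flip: of_real_mult)


lemma trace_norm_dephasing_uniform:
  assumes d: "d \<ge> 2"
  defines "e \<equiv> uniform_vec d"
  shows "trace_norm (complex_of_real c \<cdot>\<^sub>m (ket_bra e e - phase_conj d (root_of_unity d) (ket_bra e e)))
    = 2 * \<bar>c\<bar>"
proof -
  define f where "f = vec d (\<lambda>i. root_of_unity d i * e $ i)"
  have ef: "e \<in> carrier_vec d" "f \<in> carrier_vec d" by (simp_all add: e_def f_def uniform_vec_def)
  have "cinner e e = 1" "cinner f f = 1"
    using d cinner_uniform_vec[of d]
    by (simp_all add: e_def f_def uniform_vec_def cinner_def mult.assoc flip: of_real_mult)
  moreover have "cinner e f = complex_of_real (1 / real d) * (\<Sum>k<d. root_of_unity d k)"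
    by (simp add: e_def f_def uniform_vec_def cinner_def sum_distrib_left mult_ac flip: of_real_mult)
  then have "cinner e f = 0" using sum_roots_of_unity[OF d] by simp
  ultimately show ?thesis
    using trace_norm_ket_bra_diff[OF ef(1) _ ef(2)] phase_conj_ket_bra[OF ef(1)] by (simp add: f_def)
qed

lemma succ_dephasing_uniform_probe:
  assumes d: "d \<ge> 2"
  defines "\<rho> \<equiv> ket_bra (uniform_vec d) (uniform_vec d)"
  shows "density d \<rho>"
    and "succ_single (dephasing d r1) (dephasing d r2) \<rho> = 1/2 + \<bar>r1 - r2\<bar> / 2"
    and "succ_general (dephasing d r1) (dephasing d r2) d 1 \<rho> = 1/2 + \<bar>r1 - r2\<bar> / 2"
proof -
  have e: "uniform_vec d \<in> carrier_vec d" by (simp add: uniform_vec_def)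
  show "density d \<rho>"
    using density_ket_bra[OF e] cinner_uniform_vec[of d] d by (simp add: \<rho>_def)
  have \<rho>: "\<rho> \<in> carrier_mat d d" using e by (simp add: \<rho>_def)
  have "trace_norm (complex_of_real (r1 - r2) \<cdot>\<^sub>m (\<rho> - phase_conj d (root_of_unity d) \<rho>)) = 2 * \<bar>r1 - r2\<bar>"
    unfolding \<rho>_def by (rule trace_norm_dephasing_uniform[OF d])
  then show "succ_single (dephasing d r1) (dephasing d r2) \<rho> = 1/2 + \<bar>r1 - r2\<bar> / 2"
    and "succ_general (dephasing d r1) (dephasing d r2) d 1 \<rho> = 1/2 + \<bar>r1 - r2\<bar> / 2"
    using \<rho> tensor_id_dephasing_diff[of \<rho> d 1]
    by (simp_all add: succ_single_def succ_general_def dephasing_diff)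
qed

theorem theorem3:
  fixes d :: nat and r1 r2 :: real
  assumes "d \<ge> 2" and "0 \<le> r1" and "r1 \<le> 1" and "0 \<le> r2" and "r2 \<le> 1"
  shows "Sup {succ_single (dephasing d r1) (dephasing d r2) \<rho> | \<rho>. density d \<rho>}
       = Sup {succ_general (dephasing d r1) (dephasing d r2) d d' \<rho> | d' \<rho>. d' \<ge> 1 \<and> density (d * d') \<rho>}"
proof -
  define v where "v = 1/2 + \<bar>r1 - r2\<bar> / 2"
  note probe = succ_dephasing_uniform_probe(1)[OF assms(1)]
    succ_dephasing_uniform_probe(2,3)[OF assms(1), of r1 r2, folded v_def]
  have "Sup {succ_single (dephasing d r1) (dephasing d r2) \<rho> | \<rho>. density d \<rho>} = v"
  proof (rule cSup_eq_maximum)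
    show "v \<in> {succ_single (dephasing d r1) (dephasing d r2) \<rho> | \<rho>. density d \<rho>}"
      using probe(1,2) by (metis (mono_tags, lifting) mem_Collect_eq)
  qed (use succ_single_dephasing_le v_def in blast)
  moreover have "Sup {succ_general (dephasing d r1) (dephasing d r2) d d' \<rho> | d' \<rho>. d' \<ge> 1 \<and> density (d * d') \<rho>} = v"
  proof (rule cSup_eq_maximum)
    show "v \<in> {succ_general (dephasing d r1) (dephasing d r2) d d' \<rho> | d' \<rho>. d' \<ge> 1 \<and> density (d * d') \<rho>}"
      using probe(1,3) by (metis (mono_tags, lifting) mem_Collect_eq mult_1_right order_refl)
  qed (use succ_general_dephasing_le v_def in blast)
  ultimately show ?thesis by simp
qed

end
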